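(* Let $\rho:\mathbb{Z}\to[0,\infty)$ be a weight with finite moments, i.e. $\sum_{x\in\mathbb{Z}}|x|^k\rho(x)<\infty$ for all $k\ge 0$, and let $f,g$ be polynomials satisfying the discrete Pearson equation $$f(x+1)\rho(x+1)-f(x)\rho(x)=g(x)\rho(x)\qquad (x\in\mathbb{Z})$$ (equivalently $\rho(x+1)/\rho(x)=(f(x)+g(x))/f(x+1)$ where $\rho(x)\neq 0$). Assume that $\rho(x)f(x)$ vanishes at the end points of the support of $\rho$. Define the operator on polynomials $$\mathcal{A}_{\rm l}=g(x)T+f(x)(\Delta+\nabla),$$ where $T\phi(x)=\phi(x+1)$, $\Delta\phi(x)=\phi(x+1)-\phi(x)$, $\nabla\phi(x)=\phi(x)-\phi(x-1)$. For real polynomials $\phi,\psi$ let $\langle\phi,\psi\rangle=\sum_{x\in\mathbb{Z}}\phi(x)\psi(x)\rho(x)$ and, for a weight $\omega$, $\langle\phi,\psi\rangle_{s,\omega}=\sum_{x\in\mathbb{Z}}[\phi(x)\psi(x+1)-\phi(x+1)\psi(x)]\omega(x)$. Then for all real polynomials $\phi,\psi$: (1) $\langle\mathcal{A}_{\rm l}\phi,\psi\rangle=-\langle\phi,\mathcal{A}_{\rm l}\psi\rangle$; (2) $\langle\phi,\mathcal{A}_{\rm l}\psi\rangle=\langle\phi,\psi\rangle_{s,\omega}$ with $\omega(x)=f(x+1)\rho(x+1)$.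
   Context: All sums are over the integer lattice $\mathbb{Z}$, with $\rho$ taken to be zero outside its support. *)

theory Defs
  imports "HOL-Analysis.Analysis" "HOL-Computational_Algebra.Polynomial"
begin

definition shiftT :: "real poly \<Rightarrow> real poly" where
  "shiftT \<phi> = pcompose \<phi> [:1, 1:]"

definition fwd_diff :: "real poly \<Rightarrow> real poly" where
  "fwd_diff \<phi> = pcompose \<phi> [:1, 1:] - \<phi>"

definition bwd_diff :: "real poly \<Rightarrow> real poly" where
  "bwd_diff \<phi> = \<phi> - pcompose \<phi> [:-1, 1:]"

definition A_l :: "real poly \<Rightarrow> real poly \<Rightarrow> real poly \<Rightarrow> real poly" where
  "A_l f g \<phi> = g * shiftT \<phi> + f * (fwd_diff \<phi> + bwd_diff \<phi>)"

definition wip :: "(int \<Rightarrow> real) \<Rightarrow> real poly \<Rightarrow> real poly \<Rightarrow> real" where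
  "wip \<rho> \<phi> \<psi> = (\<Sum>\<^sub>\<infinity>x\<in>(UNIV::int set).
      poly \<phi> (of_int x) * poly \<psi> (of_int x) * \<rho> x)"

definition sip :: "(int \<Rightarrow> real) \<Rightarrow> real poly \<Rightarrow> real poly \<Rightarrow> real" where
  "sip \<omega> \<phi> \<psi> = (\<Sum>\<^sub>\<infinity>x\<in>(UNIV::int set).
      (poly \<phi> (of_int x) * poly \<psi> (of_int (x + 1))
        - poly \<phi> (of_int (x + 1)) * poly \<psi> (of_int x)) * \<omega> x)"

end

theory Submission
  imports Defs
begin

text \<open>Write \<open>w = f \<rho>\<close>. The Pearson equation says \<open>g \<rho> = w(x+1) - w(x)\<close>, so
  \<open>\<phi>(x) (A\<^sub>l \<psi>)(x) \<rho>(x) = \<phi>(x) \<psi>(x+1) w(x+1) - \<phi>(x) \<psi>(x-1) w(x)\<close>.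
  All terms are summable because \<open>\<rho>\<close> has finite moments, so the second sum may be
  shifted by one; this turns \<open>\<langle>\<phi>, A\<^sub>l \<psi>\<rangle>\<close> into the symplectic form \<open>\<langle>\<phi>, \<psi>\<rangle>\<^sub>s\<^sub>,\<^sub>\<omega>\<close>.
  Antisymmetry of the symplectic form and symmetry of \<open>\<langle>_, _\<rangle>\<close> then give
  skew-adjointness of \<open>A\<^sub>l\<close>.\<close>

lemma summable_on_sum:
  fixes F :: "'i \<Rightarrow> 'a \<Rightarrow> 'b::topological_comm_monoid_add"
  assumes "finite I" "\<And>i. i \<in> I \<Longrightarrow> F i summable_on A"
  shows "(\<lambda>x. \<Sum>i\<in>I. F i x) summable_on A"
  using assms
proof (induction I rule: finite_induct)
  case (insert a I)
  then have "(\<lambda>x. F a x + (\<Sum>i\<in>I. F i x)) summable_on A"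
    by (intro summable_on_add) auto
  with insert show ?case by simp
qed simp

lemma infsum_diff:
  fixes f g :: "'a \<Rightarrow> 'b::{topological_ab_group_add, t2_space}"
  assumes "f summable_on A" "g summable_on A"
  shows "infsum (\<lambda>x. f x - g x) A = infsum f A - infsum g A"
  using infsum_add[OF assms(1) summable_on_uminus[THEN iffD2, OF assms(2)]]
  by (simp add: infsum_uminus)

lemma bij_betw_int_shift: "bij_betw (\<lambda>x::int. x + c) UNIV UNIV"
  by (rule bij_betwI[where g = "\<lambda>x. x - c"]) auto

lemma summable_on_int_shift_iff:
  "(\<lambda>x::int. h (x + c)) summable_on UNIV \<longleftrightarrow> h summable_on UNIV"
  using summable_on_reindex_bij_betw[OF bij_betw_int_shift] .

lemma infsum_int_shift: "infsum (\<lambda>x::int. h (x + c)) UNIV = infsum h UNIV"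
  using infsum_reindex_bij_betw[OF bij_betw_int_shift] .

lemma summable_on_poly_times_weight:
  fixes \<rho> :: "int \<Rightarrow> real"
  assumes nonneg: "\<And>x. \<rho> x \<ge> 0"
    and moments: "\<And>k::nat. (\<lambda>x. \<bar>real_of_int x\<bar> ^ k * \<rho> x) summable_on (UNIV::int set)"
  shows "(\<lambda>x. poly p (of_int x) * \<rho> x) summable_on (UNIV::int set)"
proof -
  have monomial: "(\<lambda>x. real_of_int x ^ i * \<rho> x) summable_on (UNIV::int set)" for i
    by (rule Infinite_Sum.abs_summable_summable,
        rule Infinite_Sum.abs_summable_on_comparison_test'[OF moments[of i]])
      (simp add: abs_mult power_abs nonneg)
  have "(\<lambda>x. \<Sum>i\<le>degree p. coeff p i * (real_of_int x ^ i * \<rho> x)) summable_on UNIV"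
    by (intro summable_on_sum summable_on_cmult_right monomial) simp
  then show ?thesis
    by (simp add: poly_altdef sum_distrib_right mult.assoc)
qed

lemma poly_A_l_times_weight:
  fixes \<rho> :: "int \<Rightarrow> real" and f g :: "real poly"
  assumes pearson: "poly f (of_int (x + 1)) * \<rho> (x + 1) - poly f (of_int x) * \<rho> x
                      = poly g (of_int x) * \<rho> x"
  shows "poly \<phi> (of_int x) * poly (A_l f g \<psi>) (of_int x) * \<rho> x
       = poly \<phi> (of_int x) * poly \<psi> (of_int x + 1) * (poly f (of_int (x + 1)) * \<rho> (x + 1))
         - poly \<phi> (of_int x) * poly \<psi> (of_int x - 1) * (poly f (of_int x) * \<rho> x)"
    (is "_ = ?rhs")
proof -
  have "poly \<phi> (of_int x) * poly (A_l f g \<psi>) (of_int x) * \<rho> x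
      = poly \<phi> (of_int x) * (poly g (of_int x) * \<rho> x * poly \<psi> (of_int x + 1)
         + poly f (of_int x) * \<rho> x * (poly \<psi> (of_int x + 1) - poly \<psi> (of_int x - 1)))"
    by (simp add: A_l_def shiftT_def fwd_diff_def bwd_diff_def poly_pcompose algebra_simps)
  also have "\<dots> = ?rhs"
    unfolding pearson[symmetric] by (simp add: algebra_simps)
  finally show ?thesis .
qed

lemma wip_A_l_eq_sip:
  fixes \<rho> :: "int \<Rightarrow> real" and f g :: "real poly"
  assumes nonneg: "\<And>x. \<rho> x \<ge> 0"
    and moments: "\<And>k::nat. (\<lambda>x. \<bar>real_of_int x\<bar> ^ k * \<rho> x) summable_on (UNIV::int set)"
    and pearson: "\<And>x. poly f (of_int (x + 1)) * \<rho> (x + 1) - poly f (of_int x) * \<rho> x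
                        = poly g (of_int x) * \<rho> x"
  shows "wip \<rho> \<phi> (A_l f g \<psi>) = sip (\<lambda>x. poly f (of_int (x + 1)) * \<rho> (x + 1)) \<phi> \<psi>"
proof -
  define w where "w x = poly f (of_int x) * \<rho> x" for x
  define S\<^sub>1 where "S\<^sub>1 x = poly \<phi> (of_int x) * poly \<psi> (of_int x + 1) * w (x + 1)" for x
  define S\<^sub>2 where "S\<^sub>2 x = poly \<phi> (of_int x + 1) * poly \<psi> (of_int x) * w (x + 1)" for x
  define S\<^sub>3 where "S\<^sub>3 x = poly \<phi> (of_int x) * poly \<psi> (of_int x - 1) * w x" for x
  have summable_S\<^sub>3: "S\<^sub>3 summable_on UNIV"
    using summable_on_poly_times_weight[OF nonneg moments, of "\<phi> * pcompose \<psi> [:-1, 1:] * f"]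
    by (simp add: S\<^sub>3_def[abs_def] w_def poly_pcompose mult_ac)
  have "(\<lambda>x. S\<^sub>3 (x + 1)) = S\<^sub>2"
    by (simp add: S\<^sub>2_def S\<^sub>3_def fun_eq_iff)
  then have summable_S\<^sub>2: "S\<^sub>2 summable_on UNIV" and S\<^sub>3_S\<^sub>2: "infsum S\<^sub>3 UNIV = infsum S\<^sub>2 UNIV"
    using summable_S\<^sub>3 summable_on_int_shift_iff[of S\<^sub>3 1] infsum_int_shift[of S\<^sub>3 1] by auto
  have "(\<lambda>x. S\<^sub>1 (x - 1)) summable_on UNIV"
    using summable_on_poly_times_weight[OF nonneg moments, of "pcompose \<phi> [:-1, 1:] * \<psi> * f"]
    by (simp add: S\<^sub>1_def w_def poly_pcompose mult_ac)
  then have summable_S\<^sub>1: "S\<^sub>1 summable_on UNIV"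
    using summable_on_int_shift_iff[of S\<^sub>1 "-1"] by simp
  have "wip \<rho> \<phi> (A_l f g \<psi>) = infsum (\<lambda>x. S\<^sub>1 x - S\<^sub>3 x) UNIV"
    unfolding wip_def S\<^sub>1_def S\<^sub>3_def w_def poly_A_l_times_weight[OF pearson] ..
  also have "\<dots> = infsum S\<^sub>1 UNIV - infsum S\<^sub>2 UNIV"
    using infsum_diff[OF summable_S\<^sub>1 summable_S\<^sub>3] S\<^sub>3_S\<^sub>2 by simp
  also have "\<dots> = infsum (\<lambda>x. S\<^sub>1 x - S\<^sub>2 x) UNIV"
    using infsum_diff[OF summable_S\<^sub>1 summable_S\<^sub>2] by simp
  also have "\<dots> = sip (\<lambda>x. poly f (of_int (x + 1)) * \<rho> (x + 1)) \<phi> \<psi>"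
    unfolding sip_def S\<^sub>1_def S\<^sub>2_def w_def by (rule infsum_cong) (simp add: algebra_simps)
  finally show ?thesis .
qed

lemma wip_commute: "wip \<rho> \<phi> \<psi> = wip \<rho> \<psi> \<phi>"
  unfolding wip_def by (simp add: mult_ac)

lemma sip_antisym: "sip \<omega> \<psi> \<phi> = - sip \<omega> \<phi> \<psi>"
  unfolding sip_def by (subst infsum_uminus[symmetric]) (simp add: algebra_simps)

theorem proposition3p6:
  fixes \<rho> :: "int \<Rightarrow> real" and f g :: "real poly"
  assumes nonneg: "\<And>x. \<rho> x \<ge> 0"
    and moments: "\<And>k::nat. (\<lambda>x. \<bar>real_of_int x\<bar> ^ k * \<rho> x) summable_on (UNIV::int set)"
    and pearson: "\<And>x. poly f (of_int (x + 1)) * \<rho> (x + 1) - poly f (of_int x) * \<rho> x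
                        = poly g (of_int x) * \<rho> x"
    and lower_end: "\<And>a. \<rho> a \<noteq> 0 \<Longrightarrow> (\<forall>y<a. \<rho> y = 0) \<Longrightarrow> \<rho> a * poly f (of_int a) = 0"
    and upper_end: "\<And>b. \<rho> b \<noteq> 0 \<Longrightarrow> (\<forall>y>b. \<rho> y = 0) \<Longrightarrow>
                      \<rho> (b + 1) * poly f (of_int (b + 1)) = 0"
  shows "wip \<rho> (A_l f g \<phi>) \<psi> = - wip \<rho> \<phi> (A_l f g \<psi>) \<and>
         wip \<rho> \<phi> (A_l f g \<psi>) =
           sip (\<lambda>x. poly f (of_int (x + 1)) * \<rho> (x + 1)) \<phi> \<psi>"
proof
  note symplectic = wip_A_l_eq_sip[OF nonneg moments pearson]
  show "wip \<rho> (A_l f g \<phi>) \<psi> = - wip \<rho> \<phi> (A_l f g \<psi>)"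
    by (simp add: wip_commute[of \<rho> "A_l f g \<phi>"] symplectic sip_antisym[of _ \<psi>])
  show "wip \<rho> \<phi> (A_l f g \<psi>) = sip (\<lambda>x. poly f (of_int (x + 1)) * \<rho> (x + 1)) \<phi> \<psi>"
    by (rule symplectic)
qed

end
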